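(* The dual norm of the dual space $\mathcal R^*$ of Read's space $\mathcal R=(c_0,|||\cdot|||)$ is $2/3$-rough, i.e. for every $x^*\in\mathcal R^*$, $$\limsup_{|||h|||\to 0}\frac{|||x^*+h|||+|||x^*-h|||-2|||x^*|||}{|||h|||}\ge \frac23,$$ where $|||\cdot|||$ on $\mathcal R^*$ denotes the dual norm. In particular, the norm of $\mathcal R^*$ is not Fréchet differentiable at any point.
   Context: Let $c_{00}(\mathbb Q)$ be the set of finitely supported sequences with rational coefficients, and let $(u_n)_{n\in\mathbb N}$ be a sequence in $c_{00}(\mathbb Q)$ which lists every element of $c_{00}(\mathbb Q)$ infinitely many times. Let $(a_n)_{n\in\mathbb N}$ be a strictly increasing sequence of positive integers with $a_n>\max\operatorname{supp} u_n$ and $a_n>\|u_n\|_1$ for every $n$. $(e_n)$ denotes the canonical unit vectors and $\langle x,y\rangle=\sum_n x_ny_n$. Read's norm on $c_0$ is $|||x||| = \|x\|_\infty + \sum_{n} 2^{-a_n^2}|\langle x, u_n - e_{a_n}\rangle|$, and Read's space is $\mathcal R=(c_0,|||\cdot|||)$ (real scalars). A norm on a Banach space $Z$ is $\varepsilon$-rough ($\varepsilon>0$) if $\limsup_{\|h\|\to0}\frac{\|z+h\|+\|z-h\|-2\|z\|}{\|h\|}\ge\varepsilon$ for every $z\in Z$. *)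

theory Defs
  imports "HOL-Analysis.Analysis"
begin

definition c0 :: "(nat \<Rightarrow> real) set" where
  "c0 = {x. x \<longlonglongrightarrow> 0}"

definition c00Q :: "(nat \<Rightarrow> rat) set" where
  "c00Q = {v. finite {k. v k \<noteq> 0}}"

definition supp :: "(nat \<Rightarrow> rat) \<Rightarrow> nat set" where
  "supp v = {k. v k \<noteq> 0}"

definition l1norm :: "(nat \<Rightarrow> rat) \<Rightarrow> real" where
  "l1norm v = (\<Sum>k\<in>supp v. \<bar>real_of_rat (v k)\<bar>)"

definition pair :: "(nat \<Rightarrow> real) \<Rightarrow> (nat \<Rightarrow> rat) \<Rightarrow> real" where
  "pair x v = (\<Sum>k\<in>supp v. x k * real_of_rat (v k))"

definition sup_norm :: "(nat \<Rightarrow> real) \<Rightarrow> real" where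
  "sup_norm x = (SUP k. \<bar>x k\<bar>)"

definition read_params :: "(nat \<Rightarrow> nat \<Rightarrow> rat) \<Rightarrow> (nat \<Rightarrow> nat) \<Rightarrow> bool" where
  "read_params u a \<longleftrightarrow>
     (\<forall>n. u n \<in> c00Q) \<and>
     (\<forall>v\<in>c00Q. infinite {n. u n = v}) \<and>
     strict_mono a \<and> (\<forall>n. 0 < a n) \<and>
     (\<forall>n. \<forall>k\<in>supp (u n). k < a n) \<and>
     (\<forall>n. l1norm (u n) < real (a n))"

definition read_norm :: "(nat \<Rightarrow> nat \<Rightarrow> rat) \<Rightarrow> (nat \<Rightarrow> nat) \<Rightarrow> (nat \<Rightarrow> real) \<Rightarrow> real" where
  "read_norm u a x = sup_norm x +
     (\<Sum>n. (1/2) ^ ((a n)^2) * \<bar>pair x (u n) - x (a n)\<bar>)"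

text \<open>The dual space of (c0, read_norm): linear functionals on c0 bounded w.r.t. Read's norm.
  Functionals are represented as functions on all sequences; only their values on c0 matter.\<close>
definition read_dual :: "(nat \<Rightarrow> nat \<Rightarrow> rat) \<Rightarrow> (nat \<Rightarrow> nat) \<Rightarrow> ((nat \<Rightarrow> real) \<Rightarrow> real) set" where
  "read_dual u a = {f.
     (\<forall>x\<in>c0. \<forall>y\<in>c0. f (\<lambda>k. x k + y k) = f x + f y) \<and>
     (\<forall>x\<in>c0. \<forall>c::real. f (\<lambda>k. c * x k) = c * f x) \<and>
     (\<exists>C. \<forall>x\<in>c0. \<bar>f x\<bar> \<le> C * read_norm u a x)}"

definition dual_norm :: "(nat \<Rightarrow> nat \<Rightarrow> rat) \<Rightarrow> (nat \<Rightarrow> nat) \<Rightarrow> ((nat \<Rightarrow> real) \<Rightarrow> real) \<Rightarrow> real" where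
  "dual_norm u a f = (SUP x\<in>{x\<in>c0. read_norm u a x \<le> 1}. \<bar>f x\<bar>)"

text \<open>A norm N on a space X of real-valued functions (pointwise operations) is eps-rough if for every z in X,
  limsup_{N h -> 0, h ~= 0} (N(z+h) + N(z-h) - 2 N z) / N h >= eps
  (the limsup written out explicitly).\<close>
definition rough :: "('a \<Rightarrow> real) set \<Rightarrow> (('a \<Rightarrow> real) \<Rightarrow> real) \<Rightarrow> real \<Rightarrow> bool" where
  "rough X N \<epsilon> \<longleftrightarrow>
     (\<forall>z\<in>X. \<forall>\<delta>>0. \<forall>\<eta>>0. \<exists>h\<in>X. 0 < N h \<and> N h < \<delta> \<and>
        (N (\<lambda>s. z s + h s) + N (\<lambda>s. z s - h s) - 2 * N z) / N h > \<epsilon> - \<eta>)"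

end

theory Submission imports Defs begin

text \<open>Let \<open>f\<close> be a functional on Read's space, almost normed by a Read-unit vector \<open>x\<close>.
  Since the series part of Read's norm is at most \<open>4/3\<close> of the sup norm, \<open>\<parallel>x\<parallel>\<^sub>\<infinity> \<ge> 3/7\<close>.
  Choose a coordinate \<open>m = a\<^sub>N\<close> far out, where \<open>x\<close> is tiny and where the unit vector \<open>e\<^sub>m\<close>
  is nearly invisible to the series (only terms with \<open>n \<ge> N\<close> see it), and perturb \<open>f\<close> by
  \<open>h = t e\<^sub>m\<^sup>*\<close>, of dual norm at most \<open>t\<close>. Testing \<open>f \<plusminus> h\<close> on \<open>x\<close> with its \<open>m\<close>-th coordinate
  replaced by \<open>\<plusminus>\<parallel>x\<parallel>\<^sub>\<infinity>\<close>, vectors of Read norm almost \<open>1\<close>, gives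
  \<open>\<parallel>f + h\<parallel> + \<parallel>f - h\<parallel> - 2\<parallel>f\<parallel> \<ge> 2t\<parallel>x\<parallel>\<^sub>\<infinity> - o(t) \<ge> (6/7 - o(1)) t\<close>.\<close>

section \<open>Sequences in \<open>c\<^sub>0\<close>\<close>

definition unit_vec :: "nat \<Rightarrow> nat \<Rightarrow> real" where
  "unit_vec m k = (if k = m then 1 else 0)"

lemma c0_add_scale: "x \<in> c0 \<Longrightarrow> y \<in> c0 \<Longrightarrow> (\<lambda>k. x k + c * y k) \<in> c0"
  unfolding c0_def by (auto intro: tendsto_add_zero tendsto_mult_right_zero)

lemma c0_scale: "x \<in> c0 \<Longrightarrow> (\<lambda>k. c * x k) \<in> c0"
  unfolding c0_def by (auto intro: tendsto_mult_right_zero)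

lemma c0_zero: "(\<lambda>k. 0) \<in> c0"
  unfolding c0_def by simp

lemma unit_vec_c0: "unit_vec m \<in> c0"
proof -
  have "\<forall>\<^sub>F k in sequentially. unit_vec m k = 0"
    by (rule eventually_sequentiallyI[of "Suc m"]) (simp add: unit_vec_def)
  then show ?thesis
    unfolding c0_def mem_Collect_eq by (rule tendsto_eventually)
qed

lemma fun_upd_eq_add_unit_vec: "x(m := r) = (\<lambda>k. x k + (r - x m) * unit_vec m k)"
  by (auto simp: unit_vec_def)

lemma c0_fun_upd: "x \<in> c0 \<Longrightarrow> x(m := r) \<in> c0"
  unfolding fun_upd_eq_add_unit_vec by (rule c0_add_scale[OF _ unit_vec_c0])

lemma abs_le_sup_norm:
  assumes "x \<in> c0"
  shows "\<bar>x k\<bar> \<le> sup_norm x"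
proof -
  have "Bseq x"
    using assms unfolding c0_def by (blast intro: convergent_imp_Bseq convergentI)
  then obtain K where "\<And>k. \<bar>x k\<bar> \<le> K"
    unfolding Bseq_def by auto
  then show ?thesis
    unfolding sup_norm_def by (intro cSUP_upper bdd_aboveI2) auto
qed

lemma sup_norm_le: "(\<And>k. \<bar>x k\<bar> \<le> B) \<Longrightarrow> sup_norm x \<le> B"
  unfolding sup_norm_def by (auto intro: cSUP_least)

lemma sup_norm_nonneg: "x \<in> c0 \<Longrightarrow> 0 \<le> sup_norm x"
  using abs_le_sup_norm[of x 0] by linarith

lemma sup_norm_scale:
  assumes "x \<in> c0"
  shows "sup_norm (\<lambda>k. c * x k) = \<bar>c\<bar> * sup_norm x"
proof (rule antisym)
  show "sup_norm (\<lambda>k. c * x k) \<le> \<bar>c\<bar> * sup_norm x"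
    by (rule sup_norm_le) (simp add: abs_mult abs_le_sup_norm[OF assms] mult_left_mono)
  show "\<bar>c\<bar> * sup_norm x \<le> sup_norm (\<lambda>k. c * x k)"
  proof (cases "c = 0")
    case True
    then show ?thesis
      using sup_norm_nonneg[OF c0_zero] by simp
  next
    case False
    have "sup_norm x \<le> sup_norm (\<lambda>k. c * x k) / \<bar>c\<bar>"
    proof (rule sup_norm_le)
      fix k
      show "\<bar>x k\<bar> \<le> sup_norm (\<lambda>k. c * x k) / \<bar>c\<bar>"
        using abs_le_sup_norm[OF c0_scale[OF assms], of c k] False
        by (simp add: abs_mult field_simps)
    qed
    then show ?thesis
      using False by (simp add: field_simps)
  qed
qed

section \<open>The pairing with finitely supported sequences\<close>

lemma abs_pair_le:
  assumes "\<And>k. \<bar>x k\<bar> \<le> B"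
  shows "\<bar>pair x v\<bar> \<le> B * l1norm v"
proof -
  have "\<bar>pair x v\<bar> \<le> (\<Sum>k\<in>supp v. \<bar>x k * real_of_rat (v k)\<bar>)"
    unfolding pair_def by (rule sum_abs)
  also have "\<dots> \<le> (\<Sum>k\<in>supp v. B * \<bar>real_of_rat (v k)\<bar>)"
    by (intro sum_mono) (simp add: abs_mult assms mult_right_mono)
  also have "\<dots> = B * l1norm v"
    unfolding l1norm_def by (simp add: sum_distrib_left)
  finally show ?thesis .
qed

lemma pair_add_scale: "pair (\<lambda>k. x k + c * y k) v = pair x v + c * pair y v"
  unfolding pair_def by (simp add: algebra_simps sum.distrib sum_distrib_left)

lemma pair_scale: "pair (\<lambda>k. c * x k) v = c * pair x v"
  unfolding pair_def by (simp add: algebra_simps sum_distrib_left)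

section \<open>Read's norm\<close>

lemma Suc_mult_four_power_le_two_power_square:
  assumes "n < (A::nat)"
  shows "(A + 1) * 4 ^ n \<le> 2 ^ A\<^sup>2"
proof -
  obtain b where b: "A = Suc b" and "n \<le> b"
    using assms by (auto dest: less_imp_Suc_add)
  have "(4::nat) ^ n \<le> 2 ^ (2 * b)"
    using \<open>n \<le> b\<close> by (simp add: power_mult power_increasing)
  moreover have "b + 2 \<le> 2 * 2 ^ b\<^sup>2"
  proof -
    have "b + 2 \<le> 2 * 2 ^ b"
      using less_exp[of b] by linarith
    also have "(2::nat) ^ b \<le> 2 ^ b\<^sup>2"
      by (intro power_increasing) (auto simp: power2_eq_square)
    finally show ?thesis by simp
  qed
  ultimately have "(A + 1) * 4 ^ n \<le> (2 * 2 ^ b\<^sup>2) * 2 ^ (2 * b)"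
    using b mult_le_mono[of "b + 2" "2 * 2 ^ b\<^sup>2" "4 ^ n" "2 ^ (2 * b)"] by simp
  also have "\<dots> = 2 ^ A\<^sup>2"
    unfolding b by (simp add: power_add[symmetric] power2_eq_square algebra_simps)
  finally show ?thesis .
qed

lemma Suc_mult_half_power_square_le:
  assumes "n < (A::nat)"
  shows "(real A + 1) * (1/2) ^ A\<^sup>2 \<le> (1/4) ^ n"
proof -
  have "real ((A + 1) * 4 ^ n) \<le> real (2 ^ A\<^sup>2)"
    using Suc_mult_four_power_le_two_power_square[OF assms] by (simp only: of_nat_le_iff)
  then have "(real A + 1) * 4 ^ n \<le> 2 ^ A\<^sup>2"
    by (simp only: of_nat_mult of_nat_add of_nat_1 of_nat_power of_nat_numeral)
  then show ?thesis
    by (simp add: power_one_over field_simps)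
qed

lemma read_norm_zero: "read_norm u a (\<lambda>k. 0) = 0"
  by (simp add: read_norm_def sup_norm_def pair_def)

locale read_space =
  fixes u :: "nat \<Rightarrow> nat \<Rightarrow> rat" and a :: "nat \<Rightarrow> nat"
  assumes params: "read_params u a"
begin

lemma strict_mono_a: "strict_mono a"
  using params unfolding read_params_def by blast

lemma supp_u_less: "k \<in> supp (u n) \<Longrightarrow> k < a n"
  using params unfolding read_params_def by blast

lemma l1norm_u_less: "l1norm (u n) < real (a n)"
  using params unfolding read_params_def by blast

lemma less_a_self: "n < a n"
proof (induction n)
  case 0
  then show ?case using params unfolding read_params_def by blast
next
  case (Suc n)
  then show ?case
    using strict_monoD[OF strict_mono_a, of n "Suc n"] by simp
qed

definition read_term :: "(nat \<Rightarrow> real) \<Rightarrow> nat \<Rightarrow> real" where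
  "read_term x n = (1/2) ^ (a n)\<^sup>2 * \<bar>pair x (u n) - x (a n)\<bar>"

definition read_series :: "(nat \<Rightarrow> real) \<Rightarrow> real" where
  "read_series x = (\<Sum>n. read_term x n)"

lemma read_norm_eq: "read_norm u a x = sup_norm x + read_series x"
  unfolding read_norm_def read_series_def read_term_def ..

lemma read_term_nonneg: "0 \<le> read_term x n"
  unfolding read_term_def by simp

lemma read_term_le:
  assumes B: "\<And>k. \<bar>x k\<bar> \<le> B"
  shows "read_term x n \<le> B * (1/4) ^ n"
proof -
  have "0 \<le> B"
    using B[of 0] by linarith
  have "\<bar>pair x (u n) - x (a n)\<bar> \<le> B * l1norm (u n) + B"
    using abs_pair_le[of x B "u n", OF B] B[of "a n"] by linarith
  also have "\<dots> \<le> B * (real (a n) + 1)"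
    using l1norm_u_less[of n] \<open>0 \<le> B\<close> by (simp add: algebra_simps mult_left_mono)
  finally have "read_term x n \<le> B * ((real (a n) + 1) * (1/2) ^ (a n)\<^sup>2)"
    unfolding read_term_def by (simp add: mult_left_mono mult.commute mult.left_commute)
  also have "\<dots> \<le> B * (1/4) ^ n"
    using Suc_mult_half_power_square_le[OF less_a_self] \<open>0 \<le> B\<close> by (rule mult_left_mono)
  finally show ?thesis .
qed

lemma summable_read_term:
  assumes "\<And>k. \<bar>x k\<bar> \<le> B"
  shows "summable (read_term x)"
  by (rule summable_comparison_test[where g = "\<lambda>n. B * (1/4) ^ n"])
     (auto simp: read_term_nonneg read_term_le[OF assms] intro!: summable_mult summable_geometric)

lemma read_series_nonneg:
  assumes "\<And>k. \<bar>x k\<bar> \<le> B"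
  shows "0 \<le> read_series x"
  unfolding read_series_def by (intro suminf_nonneg summable_read_term[OF assms] read_term_nonneg)

lemma read_series_le:
  assumes B: "\<And>k. \<bar>x k\<bar> \<le> B"
  shows "read_series x \<le> 4/3 * B"
proof -
  have "read_series x \<le> (\<Sum>n. B * (1/4) ^ n)"
    unfolding read_series_def
    by (intro suminf_le read_term_le[OF B] summable_read_term[OF B] summable_mult summable_geometric) auto
  also have "\<dots> = 4/3 * B"
    by (simp add: suminf_mult suminf_geometric)
  finally show ?thesis .
qed

lemma read_series_scale:
  assumes "\<And>k. \<bar>x k\<bar> \<le> B"
  shows "read_series (\<lambda>k. c * x k) = \<bar>c\<bar> * read_series x"
proof -
  have "read_term (\<lambda>k. c * x k) = (\<lambda>n. \<bar>c\<bar> * read_term x n)"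
    unfolding read_term_def pair_scale by (auto simp: abs_mult right_diff_distrib[symmetric])
  then show ?thesis
    unfolding read_series_def by (simp add: suminf_mult[OF summable_read_term[OF assms]])
qed

lemma read_series_add_scale:
  assumes Bx: "\<And>k. \<bar>x k\<bar> \<le> B" and By: "\<And>k. \<bar>y k\<bar> \<le> B'"
  shows "read_series (\<lambda>k. x k + c * y k) \<le> read_series x + \<bar>c\<bar> * read_series y"
proof -
  have term_le: "read_term (\<lambda>k. x k + c * y k) n \<le> read_term x n + \<bar>c\<bar> * read_term y n" for n
  proof -
    have "\<bar>pair (\<lambda>k. x k + c * y k) (u n) - (x (a n) + c * y (a n))\<bar>
        = \<bar>(pair x (u n) - x (a n)) + c * (pair y (u n) - y (a n))\<bar>"
      unfolding pair_add_scale by (simp add: algebra_simps)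
    also have "\<dots> \<le> \<bar>pair x (u n) - x (a n)\<bar> + \<bar>c\<bar> * \<bar>pair y (u n) - y (a n)\<bar>"
      by (metis abs_mult abs_triangle_ineq)
    finally have "(1/2) ^ (a n)\<^sup>2 * \<bar>pair (\<lambda>k. x k + c * y k) (u n) - (x (a n) + c * y (a n))\<bar>
        \<le> (1/2) ^ (a n)\<^sup>2 * (\<bar>pair x (u n) - x (a n)\<bar> + \<bar>c\<bar> * \<bar>pair y (u n) - y (a n)\<bar>)"
      by (rule mult_left_mono) simp
    then show ?thesis
      unfolding read_term_def by (simp add: algebra_simps)
  qed
  have Bxy: "\<bar>x k + c * y k\<bar> \<le> B + \<bar>c\<bar> * B'" for k
    using abs_triangle_ineq[of "x k" "c * y k"] Bx[of k] mult_left_mono[OF By[of k], of "\<bar>c\<bar>"]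
    by (simp add: abs_mult)
  have "read_series (\<lambda>k. x k + c * y k) \<le> (\<Sum>n. read_term x n + \<bar>c\<bar> * read_term y n)"
    unfolding read_series_def
    by (intro suminf_le term_le summable_read_term[OF Bxy] summable_add summable_mult
        summable_read_term[OF Bx] summable_read_term[OF By])
  also have "\<dots> = read_series x + \<bar>c\<bar> * read_series y"
    unfolding read_series_def
    by (simp add: suminf_add[symmetric] suminf_mult summable_read_term[OF Bx] summable_read_term[OF By]
        summable_mult)
  finally show ?thesis .
qed

text \<open>Terms with \<open>n < N\<close> do not see the coordinate \<open>a\<^sub>N\<close>: it lies beyond \<open>supp u\<^sub>n\<close> and differs from \<open>a\<^sub>n\<close>.\<close>

lemma read_series_unit_vec: "read_series (unit_vec (a N)) \<le> 2 * (1/2) ^ N"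
proof -
  have B: "\<bar>unit_vec (a N) k\<bar> \<le> 1" for k
    by (simp add: unit_vec_def)
  have term_le: "read_term (unit_vec (a N)) n \<le> (1/2) ^ N * (1/2) ^ n" for n
  proof (cases "n < N")
    case True
    then have "a n < a N"
      using strict_mono_a by (simp add: strict_mono_less)
    then have "a N \<notin> supp (u n)"
      using supp_u_less by (meson order.asym)
    then have "pair (unit_vec (a N)) (u n) = 0"
      unfolding pair_def by (intro sum.neutral) (auto simp: unit_vec_def)
    then show ?thesis
      using \<open>a n < a N\<close> by (simp add: read_term_def unit_vec_def)
  next
    case False
    have "read_term (unit_vec (a N)) n \<le> 1 * (1/4) ^ n"
      by (rule read_term_le[OF B])
    also have "\<dots> = (1/2) ^ n * (1/2) ^ n"
      by (simp flip: power_mult_distrib)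
    also have "\<dots> \<le> (1/2) ^ N * (1/2) ^ n"
      using False by (intro mult_right_mono power_decreasing) auto
    finally show ?thesis .
  qed
  have "read_series (unit_vec (a N)) \<le> (\<Sum>n. (1/2) ^ N * (1/2::real) ^ n)"
    unfolding read_series_def
    by (intro suminf_le term_le summable_read_term[OF B] summable_mult summable_geometric) auto
  also have "\<dots> = 2 * (1/2) ^ N"
    by (simp add: suminf_mult suminf_geometric)
  finally show ?thesis .
qed

lemma read_series_nonneg_c0: "x \<in> c0 \<Longrightarrow> 0 \<le> read_series x"
  using read_series_nonneg abs_le_sup_norm by blast

lemma sup_norm_le_read_norm: "x \<in> c0 \<Longrightarrow> sup_norm x \<le> read_norm u a x"
  unfolding read_norm_eq using read_series_nonneg_c0 by simp

lemma read_norm_le_sup_norm: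
  assumes "x \<in> c0"
  shows "read_norm u a x \<le> 7/3 * sup_norm x"
proof -
  have "read_series x \<le> 4/3 * sup_norm x"
    by (rule read_series_le) (rule abs_le_sup_norm[OF assms])
  then show ?thesis
    unfolding read_norm_eq by linarith
qed

lemma read_norm_nonneg: "x \<in> c0 \<Longrightarrow> 0 \<le> read_norm u a x"
  using sup_norm_le_read_norm sup_norm_nonneg by (meson order_trans)

lemma read_norm_scale:
  assumes "x \<in> c0"
  shows "read_norm u a (\<lambda>k. c * x k) = \<bar>c\<bar> * read_norm u a x"
  unfolding read_norm_eq sup_norm_scale[OF assms] read_series_scale[OF abs_le_sup_norm[OF assms]]
  by (simp add: algebra_simps)

lemma read_norm_unit_vec:
  shows "1 \<le> read_norm u a (unit_vec m)"
    and "read_norm u a (unit_vec m) \<le> 1 + read_series (unit_vec m)"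
proof -
  show "1 \<le> read_norm u a (unit_vec m)"
    using abs_le_sup_norm[OF unit_vec_c0, of m m] sup_norm_le_read_norm[OF unit_vec_c0, of m]
    by (simp add: unit_vec_def)
  show "read_norm u a (unit_vec m) \<le> 1 + read_series (unit_vec m)"
    unfolding read_norm_eq by (simp add: sup_norm_le unit_vec_def)
qed

lemma read_norm_fun_upd:
  assumes x: "x \<in> c0" and r: "\<bar>r\<bar> \<le> sup_norm x"
  shows "read_norm u a (x(m := r)) \<le> read_norm u a x + \<bar>r - x m\<bar> * read_series (unit_vec m)"
proof -
  have "sup_norm (x(m := r)) \<le> sup_norm x"
    by (rule sup_norm_le) (use abs_le_sup_norm[OF x] r in auto)
  moreover have "read_series (x(m := r)) \<le> read_series x + \<bar>r - x m\<bar> * read_series (unit_vec m)"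
    unfolding fun_upd_eq_add_unit_vec
    by (rule read_series_add_scale[OF abs_le_sup_norm[OF x], where B' = 1]) (simp add: unit_vec_def)
  ultimately show ?thesis
    unfolding read_norm_eq by simp
qed

lemma exists_coordinate_small:
  assumes x: "x \<in> c0" and c: "0 < c"
  shows "\<exists>m. \<bar>x m\<bar> < c \<and> read_series (unit_vec m) < c"
proof -
  have "(\<lambda>N. 2 * (1/2::real) ^ N) \<longlonglongrightarrow> 0"
    by (intro tendsto_mult_right_zero LIMSEQ_power_zero) simp
  then have "\<forall>\<^sub>F N in sequentially. 2 * (1/2::real) ^ N < c"
    using c by (rule order_tendstoD(2))
  moreover have "(\<lambda>N. x (a N)) \<longlonglongrightarrow> 0"
    using LIMSEQ_subseq_LIMSEQ[OF _ strict_mono_a] x unfolding c0_def comp_def by blast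
  then have "\<forall>\<^sub>F N in sequentially. \<bar>x (a N)\<bar> < c"
    using c by (auto dest: tendstoD simp: dist_real_def)
  ultimately have "\<forall>\<^sub>F N in sequentially. 2 * (1/2::real) ^ N < c \<and> \<bar>x (a N)\<bar> < c"
    by (rule eventually_conj)
  then obtain N where "2 * (1/2) ^ N < c" "\<bar>x (a N)\<bar> < c"
    using eventually_happens'[OF sequentially_bot] by blast
  then show ?thesis
    using read_series_unit_vec[of N] by (intro exI[of _ "a N"]) auto
qed

section \<open>The dual space\<close>

lemma read_dual_add_scale:
  assumes "g \<in> read_dual u a" "x \<in> c0" "y \<in> c0"
  shows "g (\<lambda>k. x k + c * y k) = g x + c * g y"
  using assms c0_scale[OF assms(3)] unfolding read_dual_def by simp

lemma read_dual_scale: "g \<in> read_dual u a \<Longrightarrow> x \<in> c0 \<Longrightarrow> g (\<lambda>k. c * x k) = c * g x"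
  unfolding read_dual_def by blast

lemma read_dual_lincomb:
  assumes f: "f \<in> read_dual u a" and g: "g \<in> read_dual u a"
  shows "(\<lambda>w. f w + c * g w) \<in> read_dual u a"
proof -
  obtain C C' where C: "\<forall>x\<in>c0. \<bar>f x\<bar> \<le> C * read_norm u a x"
    and C': "\<forall>x\<in>c0. \<bar>g x\<bar> \<le> C' * read_norm u a x"
    using f g unfolding read_dual_def by blast
  have "\<bar>f x + c * g x\<bar> \<le> (C + \<bar>c\<bar> * C') * read_norm u a x" if "x \<in> c0" for x
  proof -
    have "\<bar>f x + c * g x\<bar> \<le> \<bar>f x\<bar> + \<bar>c\<bar> * \<bar>g x\<bar>"
      by (metis abs_mult abs_triangle_ineq)
    also have "\<dots> \<le> C * read_norm u a x + \<bar>c\<bar> * (C' * read_norm u a x)"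
      using C C' that by (intro add_mono mult_left_mono) auto
    finally show ?thesis by (simp add: algebra_simps)
  qed
  moreover have "\<forall>x\<in>c0. \<forall>y\<in>c0.
      f (\<lambda>k. x k + y k) + c * g (\<lambda>k. x k + y k) = (f x + c * g x) + (f y + c * g y)"
    and "\<forall>x\<in>c0. \<forall>d. f (\<lambda>k. d * x k) + c * g (\<lambda>k. d * x k) = d * (f x + c * g x)"
    using f g unfolding read_dual_def by (simp_all add: algebra_simps)
  ultimately show ?thesis
    unfolding read_dual_def by blast
qed

lemma coordinate_in_read_dual: "(\<lambda>w. t * w m) \<in> read_dual u a"
proof -
  have "\<bar>t * x m\<bar> \<le> \<bar>t\<bar> * read_norm u a x" if "x \<in> c0" for x
    using abs_le_sup_norm[OF that, of m] sup_norm_le_read_norm[OF that]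
    by (simp add: abs_mult mult_left_mono)
  then show ?thesis
    unfolding read_dual_def by (auto simp: algebra_simps)
qed

lemma bdd_above_read_dual:
  assumes g: "g \<in> read_dual u a"
  shows "bdd_above ((\<lambda>x. \<bar>g x\<bar>) ` {x\<in>c0. read_norm u a x \<le> 1})"
proof -
  obtain C where C: "\<forall>x\<in>c0. \<bar>g x\<bar> \<le> C * read_norm u a x"
    using g unfolding read_dual_def by blast
  have "\<bar>g x\<bar> \<le> \<bar>C\<bar>" if "x \<in> c0" "read_norm u a x \<le> 1" for x
  proof -
    have "\<bar>g x\<bar> \<le> \<bar>C\<bar> * read_norm u a x"
      using C that read_norm_nonneg[OF that(1)] by (meson abs_ge_self mult_right_mono order_trans)
    also have "\<dots> \<le> \<bar>C\<bar>"
      using that(2) mult_left_mono[of _ 1 "\<bar>C\<bar>"] by simp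
    finally show ?thesis .
  qed
  then show ?thesis
    by (intro bdd_aboveI2[where M = "\<bar>C\<bar>"]) auto
qed

lemma abs_le_dual_norm_unit_ball:
  "g \<in> read_dual u a \<Longrightarrow> x \<in> c0 \<Longrightarrow> read_norm u a x \<le> 1 \<Longrightarrow> \<bar>g x\<bar> \<le> dual_norm u a g"
  unfolding dual_norm_def by (rule cSUP_upper[OF _ bdd_above_read_dual]) auto

lemma dual_norm_nonneg:
  assumes "g \<in> read_dual u a"
  shows "0 \<le> dual_norm u a g"
proof -
  have "\<bar>g (\<lambda>k. 0)\<bar> \<le> dual_norm u a g"
    by (rule abs_le_dual_norm_unit_ball[OF assms c0_zero]) (simp add: read_norm_zero)
  then show ?thesis
    by linarith
qed

lemma dual_norm_le:
  "(\<And>x. x \<in> c0 \<Longrightarrow> read_norm u a x \<le> 1 \<Longrightarrow> \<bar>g x\<bar> \<le> M) \<Longrightarrow> dual_norm u a g \<le> M"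
  unfolding dual_norm_def by (rule cSUP_least) (use c0_zero read_norm_zero in auto)

lemma abs_le_dual_norm:
  assumes g: "g \<in> read_dual u a" and y: "y \<in> c0"
  shows "\<bar>g y\<bar> \<le> dual_norm u a g * read_norm u a y"
proof (cases "read_norm u a y = 0")
  case True
  have "y = (\<lambda>k. 0)"
  proof
    fix k
    have "\<bar>y k\<bar> \<le> 0"
      using abs_le_sup_norm[OF y, of k] sup_norm_le_read_norm[OF y] True by linarith
    then show "y k = 0" by simp
  qed
  then show ?thesis
    using read_dual_scale[OF g c0_zero, of 0] by (simp add: read_norm_zero)
next
  case False
  define r where "r = read_norm u a y"
  have "0 < r"
    using False read_norm_nonneg[OF y] unfolding r_def by simp
  have "\<bar>g (\<lambda>k. (1/r) * y k)\<bar> \<le> dual_norm u a g"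
    by (rule abs_le_dual_norm_unit_ball[OF g c0_scale[OF y]])
      (unfold read_norm_scale[OF y], use \<open>0 < r\<close> in \<open>simp add: r_def\<close>)
  moreover have "\<bar>g (\<lambda>k. (1/r) * y k)\<bar> = \<bar>g y\<bar> / r"
    using \<open>0 < r\<close> unfolding read_dual_scale[OF g y] by (simp add: abs_mult)
  ultimately show ?thesis
    using pos_divide_le_eq[OF \<open>0 < r\<close>] unfolding r_def by simp
qed

lemma dual_norm_coordinate_le: "dual_norm u a (\<lambda>w. t * w m) \<le> \<bar>t\<bar>"
proof (rule dual_norm_le)
  fix x assume x: "x \<in> c0" and "read_norm u a x \<le> 1"
  then have "\<bar>x m\<bar> \<le> 1"
    using abs_le_sup_norm[OF x, of m] sup_norm_le_read_norm[OF x] by linarith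
  then show "\<bar>t * x m\<bar> \<le> \<bar>t\<bar>"
    by (simp add: abs_mult mult_left_le)
qed

lemma exists_value_on_unit_sphere:
  assumes f: "f \<in> read_dual u a" and y: "y \<in> c0" and "0 < read_norm u a y"
  shows "\<exists>x\<in>c0. read_norm u a x = 1 \<and> f x = \<bar>f y\<bar> / read_norm u a y"
proof -
  define s :: real where "s = (if f y < 0 then -1 else 1)"
  define c where "c = s / read_norm u a y"
  have "\<bar>s\<bar> = 1" "s * f y = \<bar>f y\<bar>"
    unfolding s_def by auto
  then have "\<bar>c\<bar> * read_norm u a y = 1" "c * f y = \<bar>f y\<bar> / read_norm u a y"
    unfolding c_def using assms(3) by (simp_all add: abs_divide)
  then have "read_norm u a (\<lambda>k. c * y k) = 1" "f (\<lambda>k. c * y k) = \<bar>f y\<bar> / read_norm u a y"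
    unfolding read_norm_scale[OF y] read_dual_scale[OF f y] .
  then show ?thesis
    using c0_scale[OF y] by blast
qed

lemma exists_almost_norming_vector:
  assumes f: "f \<in> read_dual u a" and "0 < \<gamma>"
  shows "\<exists>x\<in>c0. read_norm u a x = 1 \<and> dual_norm u a f - \<gamma> \<le> f x"
proof -
  have ball: "{x\<in>c0. read_norm u a x \<le> 1} \<noteq> {}"
    using c0_zero read_norm_zero by auto
  have "dual_norm u a f - \<gamma> < (SUP x\<in>{x\<in>c0. read_norm u a x \<le> 1}. \<bar>f x\<bar>)"
    using \<open>0 < \<gamma>\<close> unfolding dual_norm_def by simp
  then obtain x0 where "x0 \<in> {x\<in>c0. read_norm u a x \<le> 1}" and x0_large: "dual_norm u a f - \<gamma> < \<bar>f x0\<bar>"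
    unfolding less_cSUP_iff[OF ball bdd_above_read_dual[OF f]] by (rule bexE)
  then have x0: "x0 \<in> c0" "read_norm u a x0 \<le> 1" "dual_norm u a f - \<gamma> < \<bar>f x0\<bar>"
    by simp_all
  show ?thesis
  proof (cases "read_norm u a x0 = 0")
    case False
    then have "0 < read_norm u a x0"
      using read_norm_nonneg[OF x0(1)] by simp
    then obtain x where "x \<in> c0" "read_norm u a x = 1" "f x = \<bar>f x0\<bar> / read_norm u a x0"
      using exists_value_on_unit_sphere[OF f x0(1)] by blast
    moreover have "\<bar>f x0\<bar> \<le> \<bar>f x0\<bar> / read_norm u a x0"
      unfolding pos_le_divide_eq[OF \<open>0 < read_norm u a x0\<close>]
      using x0(2) by (rule mult_left_le) simp
    ultimately show ?thesis
      using x0(3) by auto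
  next
    case True
    then have "dual_norm u a f - \<gamma> < 0"
      using abs_le_dual_norm[OF f x0(1)] x0(3) by simp
    moreover have "0 < read_norm u a (unit_vec 0)"
      using read_norm_unit_vec(1)[of 0] by linarith
    then obtain x where "x \<in> c0" "read_norm u a x = 1"
      and "f x = \<bar>f (unit_vec 0)\<bar> / read_norm u a (unit_vec 0)"
      using exists_value_on_unit_sphere[OF f unit_vec_c0] by blast
    moreover have "0 \<le> f x"
      using \<open>f x = _\<close> \<open>0 < read_norm u a (unit_vec 0)\<close> by simp
    ultimately show ?thesis
      by auto
  qed
qed

section \<open>Roughness of the dual norm\<close>

lemma read_dual_fun_upd_le:
  assumes g: "g \<in> read_dual u a" and x: "x \<in> c0" "read_norm u a x = 1"
    and r: "\<bar>r\<bar> \<le> sup_norm x"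
  shows "g x + (r - x m) * g (unit_vec m) \<le> dual_norm u a g * (1 + 2 * read_series (unit_vec m))"
proof -
  have "\<bar>r - x m\<bar> \<le> 2"
    using abs_le_sup_norm[OF x(1), of m] sup_norm_le_read_norm[OF x(1)] r x(2) by linarith
  then have "\<bar>r - x m\<bar> * read_series (unit_vec m) \<le> 2 * read_series (unit_vec m)"
    using read_series_nonneg_c0[OF unit_vec_c0] by (rule mult_right_mono)
  then have "read_norm u a (x(m := r)) \<le> 1 + 2 * read_series (unit_vec m)"
    using read_norm_fun_upd[OF x(1) r, of m] x(2) by linarith
  then have "dual_norm u a g * read_norm u a (x(m := r))
      \<le> dual_norm u a g * (1 + 2 * read_series (unit_vec m))"
    using dual_norm_nonneg[OF g] by (rule mult_left_mono)
  then have "g (x(m := r)) \<le> dual_norm u a g * (1 + 2 * read_series (unit_vec m))"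
    using abs_le_dual_norm[OF g c0_fun_upd[OF x(1)], of m r] by linarith
  then show ?thesis
    unfolding fun_upd_eq_add_unit_vec read_dual_add_scale[OF g x(1) unit_vec_c0] .
qed

lemma dual_norm_perturbation_sum_ge:
  assumes f: "f \<in> read_dual u a" and x: "x \<in> c0" "read_norm u a x = 1"
  shows "2 * f x - 2 * x m * f (unit_vec m) + 2 * t * sup_norm x
    \<le> (dual_norm u a (\<lambda>w. f w + t * w m) + dual_norm u a (\<lambda>w. f w - t * w m))
      * (1 + 2 * read_series (unit_vec m))"
proof -
  have fph: "(\<lambda>w. f w + t * w m) \<in> read_dual u a" and fmh: "(\<lambda>w. f w - t * w m) \<in> read_dual u a"
    using read_dual_lincomb[OF f coordinate_in_read_dual, of 1 t m]
      read_dual_lincomb[OF f coordinate_in_read_dual, of "-1" t m] by simp_all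
  have "0 \<le> sup_norm x"
    by (rule sup_norm_nonneg[OF x(1)])
  then have "f x + (sup_norm x - x m) * f (unit_vec m) + t * sup_norm x
      \<le> dual_norm u a (\<lambda>w. f w + t * w m) * (1 + 2 * read_series (unit_vec m))"
    and "f x + (- sup_norm x - x m) * f (unit_vec m) + t * sup_norm x
      \<le> dual_norm u a (\<lambda>w. f w - t * w m) * (1 + 2 * read_series (unit_vec m))"
    using read_dual_fun_upd_le[OF fph x, of "sup_norm x" m]
      read_dual_fun_upd_le[OF fmh x, of "- sup_norm x" m]
    by (simp_all add: unit_vec_def algebra_simps)
  then show ?thesis
    by (simp add: algebra_simps)
qed

lemma abs_dual_unit_vec_le:
  assumes f: "f \<in> read_dual u a" and "read_series (unit_vec m) \<le> 1"
  shows "\<bar>f (unit_vec m)\<bar> \<le> 2 * dual_norm u a f"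
proof -
  have "\<bar>f (unit_vec m)\<bar> \<le> dual_norm u a f * read_norm u a (unit_vec m)"
    by (rule abs_le_dual_norm[OF f unit_vec_c0])
  also have "\<dots> \<le> dual_norm u a f * 2"
    using read_norm_unit_vec(2)[of m] assms(2) dual_norm_nonneg[OF f] by (intro mult_left_mono) auto
  finally show ?thesis by simp
qed

lemma dual_norm_coordinate_pos:
  assumes "t \<noteq> 0"
  shows "0 < dual_norm u a (\<lambda>w. t * w m)"
proof -
  have "\<bar>t\<bar> \<le> dual_norm u a (\<lambda>w. t * w m) * read_norm u a (unit_vec m)"
    using abs_le_dual_norm[OF coordinate_in_read_dual unit_vec_c0, of t m m]
    by (simp add: unit_vec_def)
  then show ?thesis
    using assms dual_norm_nonneg[OF coordinate_in_read_dual, of t m]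
    by (cases "dual_norm u a (\<lambda>w. t * w m) = 0") auto
qed

text \<open>The constants are tuned so that \<open>(2 \<cdot> 3/7 - 1/10) / (1 + 2 \<cdot> 1/20) > 2/3\<close>: the loss \<open>1/10\<close>
  absorbs the defect of the almost norming vector and the sizes of \<open>x\<^sub>m\<close> and of the series part of
  \<open>e\<^sub>m\<close>, while \<open>1 + 2 \<cdot> 1/20\<close> bounds the norm of the test vectors.\<close>

lemma exists_rough_direction:
  assumes f: "f \<in> read_dual u a" and t: "0 < t"
  shows "\<exists>h\<in>read_dual u a. 0 < dual_norm u a h \<and> dual_norm u a h \<le> t \<and>
    2/3 * t < dual_norm u a (\<lambda>w. f w + h w) + dual_norm u a (\<lambda>w. f w - h w) - 2 * dual_norm u a f"
proof -
  define F where "F = dual_norm u a f"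
  have "0 \<le> F"
    unfolding F_def by (rule dual_norm_nonneg[OF f])
  obtain x where x: "x \<in> c0" "read_norm u a x = 1" and fx: "F - t/40 \<le> f x"
    using exists_almost_norming_vector[OF f, of "t/40"] t unfolding F_def by auto
  have \<beta>: "3/7 * t \<le> t * sup_norm x"
    using read_norm_le_sup_norm[OF x(1)] x(2) t by simp
  define c where "c = min (1/20) (t / (160 * (F + 1)))"
  have "0 < c"
    unfolding c_def using t \<open>0 \<le> F\<close> by simp
  have Fc: "F * c \<le> t / 160"
  proof -
    have "c \<le> t / (160 * (F + 1))"
      unfolding c_def by simp
    then have "(F + 1) * c \<le> t / 160"
      using \<open>0 \<le> F\<close> by (simp add: field_simps)
    then show ?thesis
      using \<open>0 < c\<close> by (simp add: algebra_simps)
  qed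
  obtain m where xm: "\<bar>x m\<bar> < c" and \<sigma>: "read_series (unit_vec m) < c"
    using exists_coordinate_small[OF x(1) \<open>0 < c\<close>] by blast
  define \<sigma> h where "\<sigma> = read_series (unit_vec m)" and "h = (\<lambda>w. t * w m)"
  define L where "L = dual_norm u a (\<lambda>w. f w + h w) + dual_norm u a (\<lambda>w. f w - h w) - 2 * F"
  have "0 \<le> \<sigma>" "\<sigma> \<le> 1/20" "F * \<sigma> \<le> F * c"
    using \<sigma> read_series_nonneg_c0[OF unit_vec_c0] \<open>0 \<le> F\<close> unfolding \<sigma>_def c_def
    by (auto intro: mult_left_mono)
  have "\<bar>f (unit_vec m)\<bar> \<le> 2 * F"
    using abs_dual_unit_vec_le[OF f] \<open>\<sigma> \<le> 1/20\<close> unfolding F_def \<sigma>_def by simp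
  then have "x m * f (unit_vec m) \<le> c * (2 * F)"
    using xm abs_ge_self[of "x m * f (unit_vec m)"] \<open>0 < c\<close>
      mult_mono[of "\<bar>x m\<bar>" c "\<bar>f (unit_vec m)\<bar>" "2 * F"]
    by (simp add: abs_mult)
  then have lower: "53/70 * t \<le> L * (1 + 2 * \<sigma>)"
    using dual_norm_perturbation_sum_ge[OF f x, of m t] fx \<beta> Fc \<open>F * \<sigma> \<le> F * c\<close>
    unfolding L_def h_def \<sigma>_def by (simp add: algebra_simps)
  have gap: "2/3 * t < L"
  proof (rule ccontr)
    assume "\<not> ?thesis"
    then have "L * (1 + 2 * \<sigma>) \<le> 2/3 * t * (1 + 2 * \<sigma>)"
      using \<open>0 \<le> \<sigma>\<close> by (intro mult_right_mono) auto
    also have "\<dots> \<le> 2/3 * t * (11/10)"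
      using \<open>\<sigma> \<le> 1/20\<close> t by (intro mult_left_mono) auto
    finally show False
      using lower t by simp
  qed
  moreover have "h \<in> read_dual u a" "0 < dual_norm u a h" "dual_norm u a h \<le> t"
    unfolding h_def using coordinate_in_read_dual dual_norm_coordinate_pos dual_norm_coordinate_le[of t m] t
    by auto
  ultimately show ?thesis
    unfolding L_def F_def by blast
qed

end

theorem theorem2p6:
  fixes u :: "nat \<Rightarrow> nat \<Rightarrow> rat" and a :: "nat \<Rightarrow> nat"
  assumes "read_params u a"
  shows "rough (read_dual u a) (dual_norm u a) (2/3)"
  unfolding rough_def
proof (intro ballI allI impI)
  interpret read_space u a by (rule read_space.intro[OF assms])
  fix f and \<delta> \<eta> :: real
  assume f: "f \<in> read_dual u a" and "0 < \<delta>" "0 < \<eta>"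
  let ?N = "dual_norm u a"
  obtain h where h: "h \<in> read_dual u a" "0 < ?N h" "?N h \<le> \<delta>/2"
    and gap: "2/3 * (\<delta>/2) < ?N (\<lambda>s. f s + h s) + ?N (\<lambda>s. f s - h s) - 2 * ?N f"
    using exists_rough_direction[OF f, of "\<delta>/2"] \<open>0 < \<delta>\<close> by auto
  have "(2/3 - \<eta>) * ?N h < 2/3 * ?N h"
    using h(2) \<open>0 < \<eta>\<close> by (simp add: algebra_simps)
  also have "\<dots> \<le> 2/3 * (\<delta>/2)"
    using h(3) by simp
  finally have "(2/3 - \<eta>) * ?N h < ?N (\<lambda>s. f s + h s) + ?N (\<lambda>s. f s - h s) - 2 * ?N f"
    using gap by linarith
  then show "\<exists>h\<in>read_dual u a. 0 < ?N h \<and> ?N h < \<delta> \<and>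
      2/3 - \<eta> < (?N (\<lambda>s. f s + h s) + ?N (\<lambda>s. f s - h s) - 2 * ?N f) / ?N h"
    using h \<open>0 < \<delta>\<close> by (auto simp: pos_less_divide_eq)
qed

end
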